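(* Let $G$ be a finite free graph. Then $\phi(G)\le \chi(G)+d(G)$. Moreover, if the girth of $G$ satisfies $g(G)\ge 5$, then $\phi(G)\le \chi(G)+4$.
   Context: An independent set of $G$ is a free independent set if it is contained in at least two distinct maximal independent sets of $G$. $G$ is free if every vertex lies in some free independent set. The free chromatic number $\phi(G)$ is the minimum positive integer $t$ such that $V(G)$ can be partitioned into $t$ free independent sets. For an edge $e=uv$, $d(e)=|N(u)\cup N(v)|$ where $N(\cdot)$ is the (open) neighborhood, and $d(G)=\min\{d(e):e\in E(G)\}$. $g(G)$ is the girth (infinite for forests). *)

theory Defs
  imports Main "HOL-Library.Extended_Nat"
begin

definition simple_graph :: "'a set \<Rightarrow> ('a \<Rightarrow> 'a \<Rightarrow> bool) \<Rightarrow> bool" where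
  "simple_graph V E \<longleftrightarrow> finite V \<and> (\<forall>u v. E u v \<longrightarrow> u \<in> V \<and> v \<in> V)
     \<and> (\<forall>u v. E u v \<longrightarrow> E v u) \<and> (\<forall>v. \<not> E v v)"

definition nbhd :: "'a set \<Rightarrow> ('a \<Rightarrow> 'a \<Rightarrow> bool) \<Rightarrow> 'a \<Rightarrow> 'a set" where
  "nbhd V E v = {u \<in> V. E v u}"

definition indep_set :: "'a set \<Rightarrow> ('a \<Rightarrow> 'a \<Rightarrow> bool) \<Rightarrow> 'a set \<Rightarrow> bool" where
  "indep_set V E S \<longleftrightarrow> S \<subseteq> V \<and> (\<forall>u\<in>S. \<forall>v\<in>S. \<not> E u v)"

definition maximal_indep_set :: "'a set \<Rightarrow> ('a \<Rightarrow> 'a \<Rightarrow> bool) \<Rightarrow> 'a set \<Rightarrow> bool" where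
  "maximal_indep_set V E S \<longleftrightarrow> indep_set V E S \<and> (\<forall>T. indep_set V E T \<and> S \<subseteq> T \<longrightarrow> T = S)"

definition free_indep_set :: "'a set \<Rightarrow> ('a \<Rightarrow> 'a \<Rightarrow> bool) \<Rightarrow> 'a set \<Rightarrow> bool" where
  "free_indep_set V E S \<longleftrightarrow> indep_set V E S \<and>
     (\<exists>M1 M2. maximal_indep_set V E M1 \<and> maximal_indep_set V E M2 \<and> M1 \<noteq> M2 \<and> S \<subseteq> M1 \<and> S \<subseteq> M2)"

definition free_graph :: "'a set \<Rightarrow> ('a \<Rightarrow> 'a \<Rightarrow> bool) \<Rightarrow> bool" where
  "free_graph V E \<longleftrightarrow> (\<forall>v\<in>V. \<exists>S. free_indep_set V E S \<and> v \<in> S)"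

text \<open>Partition of V into t free independent sets, encoded by a labelling c : V -> {..<t};
  the classes are the sets {v in V. c v = i}, i < t.\<close>
definition free_chromatic_number :: "'a set \<Rightarrow> ('a \<Rightarrow> 'a \<Rightarrow> bool) \<Rightarrow> nat" where
  "free_chromatic_number V E = (LEAST t. t > 0 \<and> (\<exists>c. (\<forall>v\<in>V. c v < t) \<and>
       (\<forall>i<t. free_indep_set V E {v \<in> V. c v = i})))"

definition chromatic_number :: "'a set \<Rightarrow> ('a \<Rightarrow> 'a \<Rightarrow> bool) \<Rightarrow> nat" where
  "chromatic_number V E = (LEAST t. \<exists>c. (\<forall>v\<in>V. c v < (t::nat)) \<and>
       (\<forall>u\<in>V. \<forall>v\<in>V. E u v \<longrightarrow> c u \<noteq> c v))"

definition edge_deg :: "'a set \<Rightarrow> ('a \<Rightarrow> 'a \<Rightarrow> bool) \<Rightarrow> 'a \<Rightarrow> 'a \<Rightarrow> nat" where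
  "edge_deg V E u v = card (nbhd V E u \<union> nbhd V E v)"

definition min_edge_deg :: "'a set \<Rightarrow> ('a \<Rightarrow> 'a \<Rightarrow> bool) \<Rightarrow> nat" where
  "min_edge_deg V E = Min {edge_deg V E u v | u v. E u v}"

definition is_cycle :: "'a set \<Rightarrow> ('a \<Rightarrow> 'a \<Rightarrow> bool) \<Rightarrow> 'a list \<Rightarrow> bool" where
  "is_cycle V E cs \<longleftrightarrow> length cs \<ge> 3 \<and> distinct cs \<and> set cs \<subseteq> V \<and>
     (\<forall>i < length cs. E (cs ! i) (cs ! ((i + 1) mod length cs)))"

text \<open>Girth as an extended natural: infinite (Inf of the empty set) for forests.\<close>
definition girth :: "'a set \<Rightarrow> ('a \<Rightarrow> 'a \<Rightarrow> bool) \<Rightarrow> enat" where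
  "girth V E = Inf {enat (length cs) | cs. is_cycle V E cs}"

end

(*
  Fix an edge uv and let X = N(u) \<union> N(v); it contains u and v. Restricted to V - X, every
  colour class of an optimal proper colouring is free, since the edge uv avoids the class and
  its neighbourhood. So it suffices to cover X by few free sets, coloured with fresh colours.
  In a free graph singletons are free, which gives d(e) fresh colours, hence d(G) for the best
  edge. If the girth is at least 5, some edge uv makes {u}, {v}, N(u) - {v} and N(v) - {u}
  free. Either uv is the middle edge of a path a-u-v-b, and then, lacking triangles and
  4-cycles, the edge vb witnesses freeness of N(u) - {v} and ua that of N(v) - {u}. Or every
  edge has an endpoint of degree one; for such an edge pq with leaf q, N(q) - {p} is empty and
  N(p) - {q} consists of leaves, so the edge witnessing freeness of the singleton {p} also
  witnesses freeness of N(p) - {q}.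
*)

theory Submission
  imports Defs
begin

lemma simple_graphD:
  assumes "simple_graph V E"
  shows "finite V" "E u v \<Longrightarrow> u \<in> V" "E u v \<Longrightarrow> v \<in> V" "\<not> E v v" "E u v \<Longrightarrow> E v u"
  using assms by (auto simp: simple_graph_def)

lemma free_indep_set_subset:
  assumes "free_indep_set V E T" "S \<subseteq> T"
  shows "free_indep_set V E S"
  using assms unfolding free_indep_set_def indep_set_def by blast

lemma indep_set_insert:
  "indep_set V E (insert x S) \<longleftrightarrow>
    indep_set V E S \<and> x \<in> V \<and> \<not> E x x \<and> (\<forall>s\<in>S. \<not> E s x \<and> \<not> E x s)"
  unfolding indep_set_def by blast

lemma indep_set_extends_to_maximal:
  assumes "finite V" "indep_set V E S"
  obtains M where "maximal_indep_set V E M" "S \<subseteq> M"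
proof -
  have "finite {T. indep_set V E T}"
    by (rule finite_subset[of _ "Pow V"]) (auto simp: indep_set_def assms(1))
  with assms(2) obtain M where "M \<in> {T. indep_set V E T}" "S \<subseteq> M"
      "\<forall>T\<in>{T. indep_set V E T}. M \<subseteq> T \<longrightarrow> M = T"
    using finite_has_maximal2[of "{T. indep_set V E T}" S] by auto
  then show ?thesis
    using that unfolding maximal_indep_set_def by blast
qed

text \<open>An independent set S is free exactly when some edge avoids S together with its
  neighbourhood: the two endpoints then lie in distinct maximal extensions of S.\<close>

lemma free_indep_setI:
  assumes sg: "simple_graph V E" and "indep_set V E S" and "E x y"
    and "x \<notin> S" "y \<notin> S" "\<forall>s\<in>S. \<not> E s x \<and> \<not> E s y"
  shows "free_indep_set V E S"
proof -
  note G = simple_graphD[OF sg]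
  have "indep_set V E (insert x S)" "indep_set V E (insert y S)"
    using assms(2-) G(2,3)[OF \<open>E x y\<close>] G(4) G(5)[of x] G(5)[of y]
    by (auto simp: indep_set_insert)
  with G(1) obtain M1 M2 where M1: "maximal_indep_set V E M1" "insert x S \<subseteq> M1"
    and M2: "maximal_indep_set V E M2" "insert y S \<subseteq> M2"
    using indep_set_extends_to_maximal by metis
  have "M1 \<noteq> M2"
  proof
    assume "M1 = M2"
    with M1 M2 have "x \<in> M1" "y \<in> M1" by auto
    with M1(1) \<open>E x y\<close> show False
      unfolding maximal_indep_set_def indep_set_def by blast
  qed
  then show ?thesis
    using M1 M2 assms(2) unfolding free_indep_set_def by blast
qed

lemma free_indep_setD:
  assumes sg: "simple_graph V E" and "free_indep_set V E S"
  obtains x y where "E x y" "x \<notin> S" "y \<notin> S" "\<forall>s\<in>S. \<not> E s x \<and> \<not> E s y"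
proof -
  obtain M1 M2 where M: "maximal_indep_set V E M1" "maximal_indep_set V E M2" "M1 \<noteq> M2"
    "S \<subseteq> M1" "S \<subseteq> M2"
    using assms(2) unfolding free_indep_set_def by blast
  then have ind: "indep_set V E M1" "indep_set V E M2"
    and max2: "\<And>T. indep_set V E T \<Longrightarrow> M2 \<subseteq> T \<Longrightarrow> T = M2"
    unfolding maximal_indep_set_def by blast+
  have "\<not> M1 \<subseteq> M2"
    using M(1,3) ind(2) unfolding maximal_indep_set_def by blast
  then obtain x where x: "x \<in> M1" "x \<notin> M2" by blast
  have "\<not> indep_set V E (insert x M2)"
    using max2 x(2) by blast
  moreover have "x \<in> V" "\<not> E x x"
    using ind(1) x(1) simple_graphD(4)[OF sg] unfolding indep_set_def by auto
  ultimately obtain y where "y \<in> M2" "E y x \<or> E x y"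
    using ind(2) by (auto simp: indep_set_insert)
  then have y: "y \<in> M2" "E x y"
    using simple_graphD(5)[OF sg] by blast+
  have "\<forall>s\<in>S. \<not> E s x \<and> \<not> E s y"
    using ind M(4,5) x(1) y(1) unfolding indep_set_def by blast
  moreover have "x \<notin> S" "y \<notin> S"
    using M(4,5) x y(2) ind(1) unfolding indep_set_def by blast+
  ultimately show ?thesis
    using that[OF y(2)] by blast
qed

lemma free_graph_singleton:
  assumes "free_graph V E" "w \<in> V"
  shows "free_indep_set V E {w}"
  using assms free_indep_set_subset unfolding free_graph_def by blast

lemma free_graph_has_edge:
  assumes sg: "simple_graph V E" and "V \<noteq> {}" and "free_graph V E"
  obtains u v where "E u v"
proof -
  obtain w where "w \<in> V"
    using \<open>V \<noteq> {}\<close> by blast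
  then have "free_indep_set V E {w}"
    using \<open>free_graph V E\<close> by (rule free_graph_singleton[rotated])
  with that show ?thesis
    by (blast elim: free_indep_setD[OF sg])
qed

lemma free_chromatic_number_le:
  assumes "0 < t" "\<forall>v\<in>V. c v < t" "\<forall>i<t. free_indep_set V E {v \<in> V. c v = i}"
  shows "free_chromatic_number V E \<le> t"
proof -
  have "0 < t \<and> (\<exists>c. (\<forall>v\<in>V. c v < t) \<and> (\<forall>i<t. free_indep_set V E {v \<in> V. c v = i}))"
    using assms by metis
  then show ?thesis
    unfolding free_chromatic_number_def by (rule Least_le)
qed

lemma chromatic_colouring:
  assumes "simple_graph V E"
  obtains c where "\<forall>v\<in>V. c v < chromatic_number V E" "\<forall>u\<in>V. \<forall>v\<in>V. E u v \<longrightarrow> c u \<noteq> c v"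
proof -
  obtain f where f: "bij_betw f V {0..<card V}"
    using ex_bij_betw_finite_nat simple_graphD(1)[OF assms] by blast
  have "\<exists>(t::nat) c. (\<forall>v\<in>V. c v < t) \<and> (\<forall>u\<in>V. \<forall>v\<in>V. E u v \<longrightarrow> c u \<noteq> c v)"
  proof (intro exI[of _ "card V"] exI[of _ f] conjI ballI impI)
    show "f v < card V" if "v \<in> V" for v
      using bij_betw_apply[OF f that] by simp
    show "f u \<noteq> f v" if "u \<in> V" "v \<in> V" "E u v" for u v
      using inj_on_eq_iff[OF bij_betw_imp_inj_on[OF f] that(1,2)] that(3) simple_graphD(4)[OF assms]
      by metis
  qed
  then have "\<exists>c. (\<forall>v\<in>V. c v < chromatic_number V E) \<and> (\<forall>u\<in>V. \<forall>v\<in>V. E u v \<longrightarrow> c u \<noteq> c v)"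
    unfolding chromatic_number_def by (rule LeastI_ex)
  then show ?thesis
    using that by blast
qed

lemma free_chromatic_number_le_recolour_edge_nbhd:
  assumes sg: "simple_graph V E" and "E u v"
    and c: "\<forall>w\<in>V. c w < m" "\<forall>x\<in>V. \<forall>y\<in>V. E x y \<longrightarrow> c x \<noteq> c y"
    and f: "\<forall>w\<in>nbhd V E u \<union> nbhd V E v. f w < k"
      "\<forall>i<k. free_indep_set V E {w \<in> nbhd V E u \<union> nbhd V E v. f w = i}"
  shows "free_chromatic_number V E \<le> m + k"
proof -
  note G = simple_graphD[OF sg]
  define X where "X = nbhd V E u \<union> nbhd V E v"
  define c' where "c' w = (if w \<in> X then m + f w else c w)" for w
  have "X \<subseteq> V"
    unfolding X_def nbhd_def by blast
  have "u \<in> X" "v \<in> X"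
    using \<open>E u v\<close> G(2,3,5) unfolding X_def nbhd_def by blast+
  have old: "free_indep_set V E {w \<in> V. c' w = i}" if "i < m" for i
  proof -
    have "{w \<in> V. c' w = i} = {w \<in> V - X. c w = i}"
      using that by (auto simp: c'_def)
    moreover have "free_indep_set V E {w \<in> V - X. c w = i}"
    proof (rule free_indep_setI[OF sg _ \<open>E u v\<close>])
      show "indep_set V E {w \<in> V - X. c w = i}"
        using c(2) unfolding indep_set_def by blast
      show "u \<notin> {w \<in> V - X. c w = i}" "v \<notin> {w \<in> V - X. c w = i}"
        using \<open>u \<in> X\<close> \<open>v \<in> X\<close> by blast+
      show "\<forall>s\<in>{w \<in> V - X. c w = i}. \<not> E s u \<and> \<not> E s v"
        using G(5) unfolding X_def nbhd_def by blast
    qed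
    ultimately show ?thesis by simp
  qed
  have new: "free_indep_set V E {w \<in> V. c' w = i}" if "m \<le> i" "i < m + k" for i
  proof -
    have "{w \<in> V. c' w = i} = {w \<in> X. f w = i - m}"
      using that(1) c(1) \<open>X \<subseteq> V\<close> by (auto simp: c'_def)
    moreover have "i - m < k"
      using that by simp
    ultimately show ?thesis
      using f(2) unfolding X_def by simp
  qed
  show ?thesis
  proof (rule free_chromatic_number_le)
    show "0 < m + k"
      using f(1) \<open>v \<in> X\<close> unfolding X_def by fastforce
    show "\<forall>w\<in>V. c' w < m + k"
      using c(1) f(1) unfolding X_def c'_def by force
    show "\<forall>i<m + k. free_indep_set V E {w \<in> V. c' w = i}"
      using old new by (meson not_le)
  qed
qed

lemma min_edge_deg_attained:
  assumes "simple_graph V E" "E u0 v0"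
  obtains u v where "E u v" "min_edge_deg V E = edge_deg V E u v"
proof -
  let ?D = "{edge_deg V E u v | u v. E u v}"
  have "?D \<subseteq> (\<lambda>(u, v). edge_deg V E u v) ` (V \<times> V)"
  proof
    fix d assume "d \<in> ?D"
    then obtain u v where "d = edge_deg V E u v" "E u v" by blast
    then show "d \<in> (\<lambda>(u, v). edge_deg V E u v) ` (V \<times> V)"
      using simple_graphD(2,3)[OF assms(1)] by (intro image_eqI[of _ _ "(u, v)"]) auto
  qed
  then have "finite ?D"
    by (rule finite_subset) (simp add: simple_graphD(1)[OF assms(1)])
  moreover have "?D \<noteq> {}"
    using assms(2) by blast
  ultimately have "min_edge_deg V E \<in> ?D"
    unfolding min_edge_deg_def by (rule Min_in)
  with that show ?thesis
    by blast
qed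

lemma free_graph_singleton_labelling:
  assumes "free_graph V E" "X \<subseteq> V" "finite X"
  obtains g where "\<forall>w\<in>X. g w < card X" "\<forall>i<card X. free_indep_set V E {w \<in> X. g w = i}"
proof -
  obtain g where g: "bij_betw g X {0..<card X}"
    using ex_bij_betw_finite_nat \<open>finite X\<close> by blast
  have "\<forall>w\<in>X. g w < card X"
    using bij_betw_apply[OF g] by simp
  moreover have "\<forall>i<card X. free_indep_set V E {w \<in> X. g w = i}"
  proof (intro allI impI)
    fix i assume "i < card X"
    then obtain w where "w \<in> X" "g w = i"
      using bij_betw_imp_surj_on[OF g] by (metis atLeastLessThan_iff imageE zero_le)
    then have "{w' \<in> X. g w' = i} = {w}"
      using inj_on_eq_iff[OF bij_betw_imp_inj_on[OF g]] by blast
    with \<open>w \<in> X\<close> \<open>X \<subseteq> V\<close> show "free_indep_set V E {w \<in> X. g w = i}"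
      using free_graph_singleton[OF \<open>free_graph V E\<close>] by auto
  qed
  ultimately show ?thesis
    using that by blast
qed

theorem free_chromatic_number_le_min_edge_deg:
  assumes sg: "simple_graph V E" and "V \<noteq> {}" and fg: "free_graph V E"
  shows "free_chromatic_number V E \<le> chromatic_number V E + min_edge_deg V E"
proof -
  obtain u0 v0 where "E u0 v0"
    using free_graph_has_edge[OF assms] by blast
  then obtain u v where "E u v" and md: "min_edge_deg V E = edge_deg V E u v"
    using min_edge_deg_attained[OF sg] by blast
  define X where "X = nbhd V E u \<union> nbhd V E v"
  have "X \<subseteq> V"
    unfolding X_def nbhd_def by blast
  moreover from this have "finite X"
    using simple_graphD(1)[OF sg] by (rule finite_subset)
  ultimately obtain g where "\<forall>w\<in>X. g w < card X"
    "\<forall>i<card X. free_indep_set V E {w \<in> X. g w = i}"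
    using free_graph_singleton_labelling[OF fg] by blast
  moreover obtain c where "\<forall>w\<in>V. c w < chromatic_number V E"
    "\<forall>x\<in>V. \<forall>y\<in>V. E x y \<longrightarrow> c x \<noteq> c y"
    using chromatic_colouring[OF sg] by blast
  ultimately have "free_chromatic_number V E \<le> chromatic_number V E + card X"
    using free_chromatic_number_le_recolour_edge_nbhd[OF sg \<open>E u v\<close>] unfolding X_def by blast
  then show ?thesis
    unfolding md edge_deg_def X_def .
qed

lemma girth_le_cycle_length:
  assumes "is_cycle V E cs"
  shows "girth V E \<le> enat (length cs)"
  unfolding girth_def using assms by (intro Inf_lower) blast

lemma girth_ge_5_no_triangle:
  assumes sg: "simple_graph V E" and "girth V E \<ge> 5" and "E a b" "E b c" "E c a"
  shows False
proof -
  have "distinct [a, b, c]"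
    using assms(3-) simple_graphD(4)[OF sg] by auto
  moreover have "E ([a, b, c] ! i) ([a, b, c] ! ((i + 1) mod 3))" if "i < 3" for i
  proof -
    have "i = 0 \<or> i = 1 \<or> i = 2"
      using that by arith
    then show ?thesis
      using assms(3-) by auto
  qed
  ultimately have "is_cycle V E [a, b, c]"
    using assms(3,4) simple_graphD(2,3)[OF sg] unfolding is_cycle_def by auto
  with \<open>girth V E \<ge> 5\<close> have "(5::enat) \<le> enat (length [a, b, c])"
    using girth_le_cycle_length order_trans by blast
  then show False
    by (simp add: numeral_eq_enat)
qed

lemma girth_ge_5_no_square:
  assumes sg: "simple_graph V E" and "girth V E \<ge> 5"
    and "E a b" "E b c" "E c d" "E d a" "distinct [a, b, c, d]"
  shows False
proof -
  have "E ([a, b, c, d] ! i) ([a, b, c, d] ! ((i + 1) mod 4))" if "i < 4" for i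
  proof -
    have "i = 0 \<or> i = 1 \<or> i = 2 \<or> i = 3"
      using that by arith
    then show ?thesis
      using assms(3-6) by auto
  qed
  then have "is_cycle V E [a, b, c, d]"
    using assms(3,4,5,7) simple_graphD(2,3)[OF sg] unfolding is_cycle_def by auto
  with \<open>girth V E \<ge> 5\<close> have "(5::enat) \<le> enat (length [a, b, c, d])"
    using girth_le_cycle_length order_trans by blast
  then show False
    by (simp add: numeral_eq_enat)
qed

lemma free_nbhd_diff_if_girth_ge_5:
  assumes sg: "simple_graph V E" and g: "girth V E \<ge> 5"
    and "E u v" "E v b" "b \<noteq> u"
  shows "free_indep_set V E (nbhd V E u - {v})"
proof (rule free_indep_setI[OF sg _ \<open>E v b\<close>])
  note G = simple_graphD[OF sg]
  have no_triangle: "\<not> E z x" if "E x y" "E y z" for x y z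
    using girth_ge_5_no_triangle[OF sg g that] by blast
  show "indep_set V E (nbhd V E u - {v})"
    unfolding indep_set_def nbhd_def using no_triangle G(5) by blast
  show "v \<notin> nbhd V E u - {v}"
    by simp
  show "b \<notin> nbhd V E u - {v}"
    unfolding nbhd_def using no_triangle[OF \<open>E u v\<close> \<open>E v b\<close>] G(5) by blast
  show "\<forall>s\<in>nbhd V E u - {v}. \<not> E s v \<and> \<not> E s b"
  proof
    fix s assume s: "s \<in> nbhd V E u - {v}"
    then have "E u s" "s \<noteq> v"
      unfolding nbhd_def by auto
    have "\<not> E s v"
      using no_triangle[OF \<open>E u s\<close>] G(5)[OF \<open>E u v\<close>] by blast
    moreover have "\<not> E s b"
    proof
      assume "E s b"
      have "distinct [u, s, b, v]"
        using \<open>E u s\<close> \<open>E s b\<close> \<open>E u v\<close> \<open>E v b\<close> \<open>s \<noteq> v\<close> \<open>b \<noteq> u\<close> G(4) by auto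
      with \<open>E u s\<close> \<open>E s b\<close> G(5)[OF \<open>E v b\<close>] G(5)[OF \<open>E u v\<close>] show False
        using girth_ge_5_no_square[OF sg g] by blast
    qed
    ultimately show "\<not> E s v \<and> \<not> E s b" ..
  qed
qed

lemma free_nbhd_diff_if_leaves:
  assumes sg: "simple_graph V E" and fg: "free_graph V E"
    and "E u v" and leaves: "\<forall>a\<in>nbhd V E u - {v}. \<forall>w. E a w \<longrightarrow> w = u"
  shows "free_indep_set V E (nbhd V E u - {v})"
proof -
  note G = simple_graphD[OF sg]
  have "free_indep_set V E {u}"
    using free_graph_singleton[OF fg] G(2) \<open>E u v\<close> by blast
  then obtain x y where "E x y" "x \<noteq> u" "y \<noteq> u" "\<not> E u x" "\<not> E u y"
    by (rule free_indep_setD[OF sg]) blast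
  show ?thesis
  proof (rule free_indep_setI[OF sg _ \<open>E x y\<close>])
    show "indep_set V E (nbhd V E u - {v})"
      using leaves G(4) unfolding indep_set_def nbhd_def by blast
    show "x \<notin> nbhd V E u - {v}" "y \<notin> nbhd V E u - {v}"
      using \<open>\<not> E u x\<close> \<open>\<not> E u y\<close> unfolding nbhd_def by blast+
    show "\<forall>s\<in>nbhd V E u - {v}. \<not> E s x \<and> \<not> E s y"
      using leaves \<open>x \<noteq> u\<close> \<open>y \<noteq> u\<close> by blast
  qed
qed

lemma free_graph_girth_ge_5_good_edge:
  assumes sg: "simple_graph V E" and "V \<noteq> {}" and fg: "free_graph V E"
    and g: "girth V E \<ge> 5"
  obtains u v where "E u v" "free_indep_set V E (nbhd V E u - {v})"
    "free_indep_set V E (nbhd V E v - {u})"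
proof (cases "\<exists>u v a b. E u v \<and> E u a \<and> a \<noteq> v \<and> E v b \<and> b \<noteq> u")
  case True
  then obtain u v a b where "E u v" "E u a" "a \<noteq> v" "E v b" "b \<noteq> u" by blast
  with that show ?thesis
    using free_nbhd_diff_if_girth_ge_5[OF sg g] simple_graphD(5)[OF sg] by blast
next
  case no_path: False
  note G = simple_graphD[OF sg]
  obtain u0 v0 where "E u0 v0"
    using free_graph_has_edge[OF sg \<open>V \<noteq> {}\<close> fg] by blast
  then obtain p q where "E p q" and q_leaf: "\<forall>b. E q b \<longrightarrow> b = p"
    using no_path G(5) by blast
  have "free_indep_set V E (nbhd V E p - {q})"
  proof (rule free_nbhd_diff_if_leaves[OF sg fg \<open>E p q\<close>])
    show "\<forall>a\<in>nbhd V E p - {q}. \<forall>w. E a w \<longrightarrow> w = p"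
      using no_path G(5) \<open>E p q\<close> unfolding nbhd_def by blast
  qed
  moreover have "nbhd V E q - {p} \<subseteq> {p}"
    using q_leaf unfolding nbhd_def by blast
  then have "free_indep_set V E (nbhd V E q - {p})"
    using free_graph_singleton[OF fg G(2)[OF \<open>E p q\<close>]] free_indep_set_subset by blast
  ultimately show ?thesis
    using that \<open>E p q\<close> by blast
qed

theorem free_chromatic_number_le_if_girth_ge_5:
  assumes sg: "simple_graph V E" and "V \<noteq> {}" and fg: "free_graph V E"
    and "girth V E \<ge> 5"
  shows "free_chromatic_number V E \<le> chromatic_number V E + 4"
proof -
  obtain u v where "E u v" and A: "free_indep_set V E (nbhd V E u - {v})"
    and B: "free_indep_set V E (nbhd V E v - {u})"
    using free_graph_girth_ge_5_good_edge[OF assms] by blast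
  define f :: "'a \<Rightarrow> nat"
    where "f w = (if w = u then 0 else if w = v then 1 else if w \<in> nbhd V E u then 2 else 3)" for w
  let ?class = "\<lambda>i. {w \<in> nbhd V E u \<union> nbhd V E v. f w = i}"
  have "?class 0 \<subseteq> {u}" "?class 1 \<subseteq> {v}"
    "?class 2 \<subseteq> nbhd V E u - {v}" "?class 3 \<subseteq> nbhd V E v - {u}"
    by (auto simp: f_def)
  moreover have "free_indep_set V E {u}" "free_indep_set V E {v}"
    using free_graph_singleton[OF fg] simple_graphD(2,3)[OF sg \<open>E u v\<close>] by blast+
  ultimately have "\<forall>i<4. free_indep_set V E (?class i)"
    using A B free_indep_set_subset by (auto simp: numeral_eq_Suc less_Suc_eq)
  moreover have "\<forall>w\<in>nbhd V E u \<union> nbhd V E v. f w < 4"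
    by (simp add: f_def)
  moreover obtain c where "\<forall>w\<in>V. c w < chromatic_number V E"
    "\<forall>x\<in>V. \<forall>y\<in>V. E x y \<longrightarrow> c x \<noteq> c y"
    using chromatic_colouring[OF sg] by blast
  ultimately show ?thesis
    using free_chromatic_number_le_recolour_edge_nbhd[OF sg \<open>E u v\<close>] by blast
qed

theorem mainTheorem4:
  fixes V :: "'a set" and E :: "'a \<Rightarrow> 'a \<Rightarrow> bool"
  assumes "simple_graph V E" and "V \<noteq> {}" and "free_graph V E"
  shows "free_chromatic_number V E \<le> chromatic_number V E + min_edge_deg V E
    \<and> (girth V E \<ge> 5 \<longrightarrow> free_chromatic_number V E \<le> chromatic_number V E + 4)"
  using free_chromatic_number_le_min_edge_deg[OF assms]
    free_chromatic_number_le_if_girth_ge_5[OF assms] by blast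

end
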